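(* Let $A>0$, $\phi>0$, $0<\gamma<1$, and $\alpha,\beta>0$ with $\alpha+\beta<1$. Consider the map $F_C:(0,\infty)^2\to(0,\infty)^2$, $$F_C(k,N)=\left(A\left[2\left(\frac{\alpha}{1-\alpha}\right)\phi\, k^{2}N^{\gamma}\right]^{\alpha}k^{\beta},\ \left(\frac{1-\alpha}{4\phi k}\right)N^{1-\gamma}\right).$$ Then $F_C$ has a unique fixed point $(\bar k_C,\bar N_C)$ with $\bar k_C,\bar N_C>0$, and $$\bar k_C=\bar k_S,\qquad \bar N_C=\Omega\,\bar N_S,\qquad \Omega=\frac{1}{2^{1/\gamma}}\in(0,1),$$ where $$\bar k_S=\left(A^{1/\alpha}\frac{\alpha}{2}\right)^{\frac{\alpha}{1-\beta-\alpha}},\qquad \bar N_S=A^{\frac{-1}{(1-\beta-\alpha)\gamma}}\left(\frac{1-\alpha}{2\phi}\right)^{\frac{1-\beta-2\alpha}{(1-\beta-\alpha)\gamma}}\left[\left(\frac{\alpha}{1-\alpha}\right)\phi\right]^{\frac{-\alpha}{(1-\beta-\alpha)\gamma}}$$ is the unique positive fixed point of the map $F_S(k,N)=\left(A\left[\frac{\alpha}{1-\alpha}\phi k^2N^{\gamma}\right]^{\alpha}k^{\beta},\ \frac{1-\alpha}{2\phi k}N^{1-\gamma}\right)$.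
   Context: Overlapping-generations model with human capital $k_t$ and adult population $N_t$. $F_C$ describes the case where father's and mother's childcare times are perfect complements: optimal fertility $n^*(k,N)=\frac{1-\alpha}{4\phi kN^{\gamma}}$ and education spending $e^*(k,N)=2\frac{\alpha}{1-\alpha}\phi k^2N^{\gamma}$, with $k_{t+1}=Ae^{*\alpha}k_t^{\beta}$, $N_{t+1}=n^*N_t$. $F_S$ is the analogous map for the perfect-substitutes case. "Economically meaningful" means both coordinates strictly positive. *)

theory Defs
  imports Complex_Main
begin

definition F_C :: "real \<Rightarrow> real \<Rightarrow> real \<Rightarrow> real \<Rightarrow> real \<Rightarrow> real \<times> real \<Rightarrow> real \<times> real" where
  "F_C A \<phi> \<gamma> \<alpha> \<beta> = (\<lambda>(k, N).
     (A * (2 * (\<alpha> / (1 - \<alpha>)) * \<phi> * k^2 * N powr \<gamma>) powr \<alpha> * k powr \<beta>,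
      ((1 - \<alpha>) / (4 * \<phi> * k)) * N powr (1 - \<gamma>)))"

definition F_S :: "real \<Rightarrow> real \<Rightarrow> real \<Rightarrow> real \<Rightarrow> real \<Rightarrow> real \<times> real \<Rightarrow> real \<times> real" where
  "F_S A \<phi> \<gamma> \<alpha> \<beta> = (\<lambda>(k, N).
     (A * ((\<alpha> / (1 - \<alpha>)) * \<phi> * k^2 * N powr \<gamma>) powr \<alpha> * k powr \<beta>,
      ((1 - \<alpha>) / (2 * \<phi> * k)) * N powr (1 - \<gamma>)))"

definition kbar_S :: "real \<Rightarrow> real \<Rightarrow> real \<Rightarrow> real \<Rightarrow> real \<Rightarrow> real" where
  "kbar_S A \<phi> \<gamma> \<alpha> \<beta> = (A powr (1 / \<alpha>) * (\<alpha> / 2)) powr (\<alpha> / (1 - \<beta> - \<alpha>))"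

definition Nbar_S :: "real \<Rightarrow> real \<Rightarrow> real \<Rightarrow> real \<Rightarrow> real \<Rightarrow> real" where
  "Nbar_S A \<phi> \<gamma> \<alpha> \<beta> =
     A powr (-1 / ((1 - \<beta> - \<alpha>) * \<gamma>))
     * ((1 - \<alpha>) / (2 * \<phi>)) powr ((1 - \<beta> - 2 * \<alpha>) / ((1 - \<beta> - \<alpha>) * \<gamma>))
     * ((\<alpha> / (1 - \<alpha>)) * \<phi>) powr (- \<alpha> / ((1 - \<beta> - \<alpha>) * \<gamma>))"

definition Omega :: "real \<Rightarrow> real" where
  "Omega \<gamma> = 1 / (2 powr (1 / \<gamma>))"

end

theory Submission
  imports Defs
begin

text \<open>Both maps are instances of growth_map with coefficients a, b, and F_C arises from F_S
  by doubling a and halving b. In the coordinates (ln k, ln N) the fixed-point equations are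
  linear and triangular: the second gives \<gamma> ln N = ln b - ln k, and substituted into the
  first it leaves (1 - \<alpha> - \<beta>) ln k = ln A + \<alpha> ln (a b). Hence the steady state k
  depends on a and b only through the product a b, which F_C and F_S share, while
  N = (b / k) powr (1/\<gamma>) scales by 2 powr (-1/\<gamma>) when b is halved.\<close>

definition growth_map :: "real \<Rightarrow> real \<Rightarrow> real \<Rightarrow> real \<Rightarrow> real \<Rightarrow> real \<Rightarrow> real \<times> real \<Rightarrow> real \<times> real" where
  "growth_map A a b \<gamma> \<alpha> \<beta> = (\<lambda>(k, N).
     (A * (a * k^2 * N powr \<gamma>) powr \<alpha> * k powr \<beta>, (b / k) * N powr (1 - \<gamma>)))"

definition steady_k :: "real \<Rightarrow> real \<Rightarrow> real \<Rightarrow> real \<Rightarrow> real \<Rightarrow> real" where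
  "steady_k A a b \<alpha> \<beta> = (A * (a * b) powr \<alpha>) powr (1 / (1 - \<alpha> - \<beta>))"

definition steady_N :: "real \<Rightarrow> real \<Rightarrow> real \<Rightarrow> real \<Rightarrow> real \<Rightarrow> real \<Rightarrow> real" where
  "steady_N A a b \<gamma> \<alpha> \<beta> = (b / steady_k A a b \<alpha> \<beta>) powr (1 / \<gamma>)"

lemma growth_map_fixed_iff_ln:
  fixes A a b \<gamma> \<alpha> \<beta> k N :: real
  assumes "A > 0" "a > 0" "b > 0" "k > 0" "N > 0"
  shows "growth_map A a b \<gamma> \<alpha> \<beta> (k, N) = (k, N) \<longleftrightarrow>
    (1 - \<alpha> - \<beta>) * ln k = ln A + \<alpha> * ln (a * b) \<and> \<gamma> * ln N = ln b - ln k"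
proof -
  have first: "A * (a * k^2 * N powr \<gamma>) powr \<alpha> * k powr \<beta> = k \<longleftrightarrow>
      ln A + \<alpha> * (ln a + 2 * ln k + \<gamma> * ln N) + \<beta> * ln k = ln k"
    using assms by (subst ln_inj_iff[symmetric]) (simp_all add: ln_mult ln_powr ln_realpow)
  have second: "(b / k) * N powr (1 - \<gamma>) = N \<longleftrightarrow> \<gamma> * ln N = ln b - ln k"
    using assms by (subst ln_inj_iff[symmetric]) (auto simp: ln_mult ln_div ln_powr algebra_simps)
  have "ln A + \<alpha> * (ln a + 2 * ln k + \<gamma> * ln N) + \<beta> * ln k
      = ln A + \<alpha> * ln (a * b) + (\<alpha> + \<beta>) * ln k"
    if "\<gamma> * ln N = ln b - ln k"
    unfolding that using assms by (simp add: ln_mult algebra_simps)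
  then show ?thesis
    unfolding growth_map_def using first second by (auto simp: algebra_simps)
qed

lemma steady_k_pos: "steady_k A a b \<alpha> \<beta> > 0" if "A > 0" "a > 0" "b > 0"
  using that by (simp add: steady_k_def)

lemma steady_N_pos: "steady_N A a b \<gamma> \<alpha> \<beta> > 0" if "A > 0" "a > 0" "b > 0"
  using that steady_k_pos[of A a b \<alpha> \<beta>] by (simp add: steady_N_def)

lemma ln_steady_k:
  assumes "A > 0" "a > 0" "b > 0"
  shows "ln (steady_k A a b \<alpha> \<beta>) = (ln A + \<alpha> * ln (a * b)) / (1 - \<alpha> - \<beta>)"
  using assms by (simp add: steady_k_def ln_mult ln_powr)

lemma growth_map_fixed_iff:
  fixes A a b \<gamma> \<alpha> \<beta> k N :: real
  assumes "A > 0" "a > 0" "b > 0" "\<gamma> \<noteq> 0" "\<alpha> + \<beta> \<noteq> 1" "k > 0" "N > 0"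
  shows "growth_map A a b \<gamma> \<alpha> \<beta> (k, N) = (k, N) \<longleftrightarrow>
    k = steady_k A a b \<alpha> \<beta> \<and> N = steady_N A a b \<gamma> \<alpha> \<beta>"
proof -
  let ?k = "steady_k A a b \<alpha> \<beta>"
  have "?k > 0" using assms by (simp add: steady_k_pos)
  then have k_iff: "k = ?k \<longleftrightarrow> (1 - \<alpha> - \<beta>) * ln k = ln A + \<alpha> * ln (a * b)"
    using assms by (subst ln_inj_iff[symmetric]) (auto simp: ln_steady_k field_simps)
  have N_iff: "N = steady_N A a b \<gamma> \<alpha> \<beta> \<longleftrightarrow> \<gamma> * ln N = ln b - ln ?k"
    using assms \<open>?k > 0\<close> steady_N_pos[of A a b \<gamma> \<alpha> \<beta>]
    by (subst ln_inj_iff[symmetric]) (auto simp: steady_N_def ln_powr ln_div field_simps)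
  show ?thesis
    using growth_map_fixed_iff_ln[OF assms(1-3,6,7)] k_iff N_iff by auto
qed

lemma growth_map_unique_fixed_point:
  fixes A a b \<gamma> \<alpha> \<beta> :: real
  assumes "A > 0" "a > 0" "b > 0" "\<gamma> \<noteq> 0" "\<alpha> + \<beta> \<noteq> 1"
  shows "\<exists>!p. fst p > 0 \<and> snd p > 0 \<and> growth_map A a b \<gamma> \<alpha> \<beta> p = p"
proof (rule ex1I)
  let ?p = "(steady_k A a b \<alpha> \<beta>, steady_N A a b \<gamma> \<alpha> \<beta>)"
  show "fst ?p > 0 \<and> snd ?p > 0 \<and> growth_map A a b \<gamma> \<alpha> \<beta> ?p = ?p"
    using assms growth_map_fixed_iff steady_k_pos steady_N_pos by simp
  show "p = ?p" if "fst p > 0 \<and> snd p > 0 \<and> growth_map A a b \<gamma> \<alpha> \<beta> p = p" for p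
    using that assms growth_map_fixed_iff[of A a b \<gamma> \<alpha> \<beta> "fst p" "snd p"] by (cases p) auto
qed

lemma steady_k_rescale:
  "c \<noteq> 0 \<Longrightarrow> steady_k A (c * a) (b / c) \<alpha> \<beta> = steady_k A a b \<alpha> \<beta>"
  by (simp add: steady_k_def)

lemma steady_N_rescale:
  assumes "A > 0" "a > 0" "b > 0" "c > 0"
  shows "steady_N A (c * a) (b / c) \<gamma> \<alpha> \<beta> = steady_N A a b \<gamma> \<alpha> \<beta> / c powr (1 / \<gamma>)"
proof -
  have "steady_k A (c * a) (b / c) \<alpha> \<beta> = steady_k A a b \<alpha> \<beta>"
    using assms by (simp add: steady_k_rescale)
  then show ?thesis
    using assms steady_k_pos[of A a b \<alpha> \<beta>]
    by (simp add: steady_N_def powr_divide powr_mult mult.commute)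
qed

lemma kbar_S_eq_steady_k:
  assumes "A > 0" "\<phi> > 0" "0 < \<alpha>" "\<alpha> < 1"
  shows "kbar_S A \<phi> \<gamma> \<alpha> \<beta> = steady_k A (\<alpha> / (1 - \<alpha>) * \<phi>) ((1 - \<alpha>) / (2 * \<phi>)) \<alpha> \<beta>"
proof -
  have "kbar_S A \<phi> \<gamma> \<alpha> \<beta> = ((A powr (1 / \<alpha>) * (\<alpha> / 2)) powr \<alpha>) powr (1 / (1 - \<alpha> - \<beta>))"
    using assms by (simp add: kbar_S_def powr_powr algebra_simps)
  also have "(A powr (1 / \<alpha>) * (\<alpha> / 2)) powr \<alpha> = A * (\<alpha> / 2) powr \<alpha>"
    using assms by (subst powr_mult) (simp_all add: powr_powr)
  also have "\<alpha> / 2 = \<alpha> / (1 - \<alpha>) * \<phi> * ((1 - \<alpha>) / (2 * \<phi>))"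
    using assms by (simp add: field_simps)
  finally show ?thesis
    by (simp add: steady_k_def)
qed

lemma steady_N_eq_powr_product:
  assumes "A > 0" "a > 0" "b > 0" "\<gamma> \<noteq> 0" "\<alpha> + \<beta> \<noteq> 1"
  shows "steady_N A a b \<gamma> \<alpha> \<beta> =
    A powr (-1 / ((1 - \<beta> - \<alpha>) * \<gamma>)) * b powr ((1 - \<beta> - 2 * \<alpha>) / ((1 - \<beta> - \<alpha>) * \<gamma>))
      * a powr (- \<alpha> / ((1 - \<beta> - \<alpha>) * \<gamma>))"
proof -
  define D where "D = 1 - \<alpha> - \<beta>"
  have D: "D \<noteq> 0" "1 - \<beta> - \<alpha> = D" "1 - \<beta> - 2 * \<alpha> = D - \<alpha>"
    using assms by (auto simp: D_def)
  have "ln (steady_N A a b \<gamma> \<alpha> \<beta>) = (ln b - (ln A + \<alpha> * (ln a + ln b)) / D) / \<gamma>"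
    using assms steady_k_pos[of A a b \<alpha> \<beta>]
    by (simp add: steady_N_def ln_steady_k ln_mult ln_div ln_powr D_def)
  also have "\<dots> = -1 / (D * \<gamma>) * ln A + (D - \<alpha>) / (D * \<gamma>) * ln b + - \<alpha> / (D * \<gamma>) * ln a"
    using D assms by (simp add: field_simps)
  also have "\<dots> = ln (A powr (-1 / (D * \<gamma>)) * b powr ((D - \<alpha>) / (D * \<gamma>)) * a powr (- \<alpha> / (D * \<gamma>)))"
    using assms by (simp add: ln_mult ln_powr)
  finally show ?thesis
    unfolding D(2,3) using assms steady_N_pos[of A a b \<gamma> \<alpha> \<beta>] by simp
qed

theorem proposition3:
  fixes A \<phi> \<gamma> \<alpha> \<beta> :: real
  assumes "A > 0" and "\<phi> > 0" and "0 < \<gamma>" and "\<gamma> < 1"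
    and "\<alpha> > 0" and "\<beta> > 0" and "\<alpha> + \<beta> < 1"
  shows "(\<exists>!p. fst p > 0 \<and> snd p > 0 \<and> F_C A \<phi> \<gamma> \<alpha> \<beta> p = p)
    \<and> (\<exists>!p. fst p > 0 \<and> snd p > 0 \<and> F_S A \<phi> \<gamma> \<alpha> \<beta> p = p)
    \<and> kbar_S A \<phi> \<gamma> \<alpha> \<beta> > 0 \<and> Nbar_S A \<phi> \<gamma> \<alpha> \<beta> > 0
    \<and> F_S A \<phi> \<gamma> \<alpha> \<beta> (kbar_S A \<phi> \<gamma> \<alpha> \<beta>, Nbar_S A \<phi> \<gamma> \<alpha> \<beta>)
        = (kbar_S A \<phi> \<gamma> \<alpha> \<beta>, Nbar_S A \<phi> \<gamma> \<alpha> \<beta>)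
    \<and> F_C A \<phi> \<gamma> \<alpha> \<beta> (kbar_S A \<phi> \<gamma> \<alpha> \<beta>, Omega \<gamma> * Nbar_S A \<phi> \<gamma> \<alpha> \<beta>)
        = (kbar_S A \<phi> \<gamma> \<alpha> \<beta>, Omega \<gamma> * Nbar_S A \<phi> \<gamma> \<alpha> \<beta>)
    \<and> 0 < Omega \<gamma> \<and> Omega \<gamma> < 1"
proof -
  define a b where "a = \<alpha> / (1 - \<alpha>) * \<phi>" and "b = (1 - \<alpha>) / (2 * \<phi>)"
  have "\<alpha> < 1" "\<alpha> + \<beta> \<noteq> 1" "\<gamma> \<noteq> 0"
    using assms by auto
  have "a > 0" "b > 0"
    using assms \<open>\<alpha> < 1\<close> by (simp_all add: a_def b_def)
  have F_S: "F_S A \<phi> \<gamma> \<alpha> \<beta> = growth_map A a b \<gamma> \<alpha> \<beta>"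
    by (simp add: F_S_def growth_map_def a_def b_def)
  have F_C: "F_C A \<phi> \<gamma> \<alpha> \<beta> = growth_map A (2 * a) (b / 2) \<gamma> \<alpha> \<beta>"
    by (simp add: F_C_def growth_map_def a_def b_def mult.assoc)
  have kbar: "kbar_S A \<phi> \<gamma> \<alpha> \<beta> = steady_k A a b \<alpha> \<beta>"
    using assms \<open>\<alpha> < 1\<close> by (simp add: kbar_S_eq_steady_k a_def b_def)
  have Nbar: "Nbar_S A \<phi> \<gamma> \<alpha> \<beta> = steady_N A a b \<gamma> \<alpha> \<beta>"
    using assms \<open>a > 0\<close> \<open>b > 0\<close> \<open>\<alpha> + \<beta> \<noteq> 1\<close> \<open>\<gamma> \<noteq> 0\<close>
    by (simp add: Nbar_S_def steady_N_eq_powr_product a_def b_def)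
  have k_C: "steady_k A (2 * a) (b / 2) \<alpha> \<beta> = steady_k A a b \<alpha> \<beta>"
    by (simp add: steady_k_rescale)
  have N_C: "Omega \<gamma> * steady_N A a b \<gamma> \<alpha> \<beta> = steady_N A (2 * a) (b / 2) \<gamma> \<alpha> \<beta>"
    using \<open>A > 0\<close> \<open>a > 0\<close> \<open>b > 0\<close> by (simp add: steady_N_rescale Omega_def)
  have "0 < Omega \<gamma>" "Omega \<gamma> < 1"
    using assms by (simp_all add: Omega_def)
  then show ?thesis
    unfolding F_S F_C kbar Nbar N_C
    using assms \<open>a > 0\<close> \<open>b > 0\<close> \<open>\<alpha> + \<beta> \<noteq> 1\<close> \<open>\<gamma> \<noteq> 0\<close>
    by (simp add: growth_map_unique_fixed_point growth_map_fixed_iff steady_k_pos steady_N_pos k_C)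
qed

end
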